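(* Let $\bm\mu$ be an Angelesco system on the unit circle with arcs $\Gamma_1,\dots,\Gamma_r$ and the associated square-root branch (see context). Let $\bm n\in\mathbb N^r$ be $\phi$-normal, $\tau\in\partial\mathbb D$, and let $X\not\equiv0$ be a $\tau$-invariant paraorthogonal function for $\bm n$. Then for each $j=1,\dots,r$, the polynomial $z^{(|\bm n|+1)/2}X(z)$ has at least $n_j$ distinct zeros of odd multiplicity in $\operatorname{Int}(\Gamma_j)$ (the arc $\Gamma_j$ without its endpoints).
   Context: $\partial\mathbb D=\{|z|=1\}$; measures are finite, positive, Borel, with infinite support. Angelesco system: closed arcs $\Gamma_j\subset\partial\mathbb D$ with $\operatorname{supp}\mu_j\subseteq\Gamma_j$ and $\Gamma_j\cap\Gamma_k$ contained in the set of endpoints for $j\ne k$; $t_0\in\mathbb R$ and the ordering of the arcs are such that $t_0\le\theta_1\le\dots\le\theta_r\le t_0+2\pi$ whenever $e^{i\theta_k}\in\Gamma_k$; $\mu_r$ has no point mass at $e^{it_0}$. Branch: $z^{k/2}=|z|^{k/2}\exp(ik\arg_{[t_0,t_0+2\pi)}(z)/2)$, $k\in\mathbb Z$. $|\bm n|=\sum_j n_j$; $\operatorname{span}\{z^p\}_{p=a}^b$ ($b-a\in\mathbb Z$) is the span of $z^a,\dots,z^b$. $\bm n$ is $\phi$-normal if there is a unique $\phi\in\operatorname{span}\{z^p\}_{p=-|\bm n|/2}^{|\bm n|/2}$ with coefficient of $z^{|\bm n|/2}$ equal to $1$ and $\int\phi(z)z^{-p}\,d\mu_j(z)=0$ for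 $p=-n_j/2,\dots,n_j/2-1$, all $j$. A $\tau$-invariant paraorthogonal function for $\bm n$ is any $X\in\operatorname{span}\{z^p\}_{p=-(|\bm n|+1)/2}^{(|\bm n|+1)/2}$ with $X(z)=\tau\overline{X(1/\bar z)}$ and $\int X(z)z^{-p}\,d\mu_j(z)=0$ for $p=-(n_j-1)/2,\dots,(n_j-1)/2$, $j=1,\dots,r$. *)

theory Defs
  imports "HOL-Analysis.Analysis" "HOL-Computational_Algebra.Polynomial"
begin

definition argt :: "real \<Rightarrow> complex \<Rightarrow> real" where
  "argt t0 z = t0 + 2 * pi * frac ((Arg z - t0) / (2 * pi))"

text \<open>The branch z^(k/2) = |z|^(k/2) exp(i k arg_[t0,t0+2pi)(z) / 2).\<close>
definition halfpow :: "real \<Rightarrow> int \<Rightarrow> complex \<Rightarrow> complex" where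
  "halfpow t0 k z = complex_of_real (norm z powr (real_of_int k / 2))
                    * exp (\<i> * complex_of_real (real_of_int k * argt t0 z / 2))"

text \<open>Element of span of z^p, p = -N/2, -N/2+1, ..., N/2, with coefficient list cs
  (cs ! i is the coefficient of z^((2i-N)/2)).\<close>
definition span_eval :: "real \<Rightarrow> nat \<Rightarrow> complex list \<Rightarrow> complex \<Rightarrow> complex" where
  "span_eval t0 N cs z = (\<Sum>i\<le>N. cs ! i * halfpow t0 (2 * int i - int N) z)"

definition arc_cl :: "real \<Rightarrow> real \<Rightarrow> complex set" where
  "arc_cl a b = cis ` {a..b}"

definition arc_int :: "real \<Rightarrow> real \<Rightarrow> complex set" where
  "arc_int a b = cis ` {a<..<b}"

definition msupp :: "complex measure \<Rightarrow> complex set" where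
  "msupp M = {z. \<forall>e>0. emeasure M (ball z e) \<noteq> 0}"

definition angelesco_circle ::
  "nat \<Rightarrow> real \<Rightarrow> (nat \<Rightarrow> real) \<Rightarrow> (nat \<Rightarrow> real) \<Rightarrow> (nat \<Rightarrow> complex measure) \<Rightarrow> bool" where
  "angelesco_circle r t0 a b \<mu> \<longleftrightarrow>
     0 < r \<and>
     t0 \<le> a 0 \<and> b (r - 1) \<le> t0 + 2 * pi \<and>
     (\<forall>j<r. a j < b j \<and> b j - a j < 2 * pi) \<and>
     (\<forall>j. Suc j < r \<longrightarrow> b j \<le> a (Suc j)) \<and>
     (\<forall>j<r. sets (\<mu> j) = sets borel \<and> emeasure (\<mu> j) (space (\<mu> j)) < \<infinity>
            \<and> infinite (msupp (\<mu> j)) \<and> msupp (\<mu> j) \<subseteq> arc_cl (a j) (b j)) \<and>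
     emeasure (\<mu> (r - 1)) {cis t0} = 0"

definition ntotal :: "nat \<Rightarrow> (nat \<Rightarrow> nat) \<Rightarrow> nat" where
  "ntotal r n = (\<Sum>j<r. n j)"

definition phi_normal :: "nat \<Rightarrow> real \<Rightarrow> (nat \<Rightarrow> complex measure) \<Rightarrow> (nat \<Rightarrow> nat) \<Rightarrow> bool" where
  "phi_normal r t0 \<mu> n \<longleftrightarrow>
     (\<exists>!cs. length cs = ntotal r n + 1 \<and> cs ! (ntotal r n) = 1 \<and>
        (\<forall>j<r. \<forall>k<n j.
           (\<integral>z. span_eval t0 (ntotal r n) cs z * halfpow t0 (int (n j) - 2 * int k) z \<partial>(\<mu> j)) = 0))"

definition paraorth :: "nat \<Rightarrow> real \<Rightarrow> (nat \<Rightarrow> complex measure) \<Rightarrow> (nat \<Rightarrow> nat) \<Rightarrow> complex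
     \<Rightarrow> (complex \<Rightarrow> complex) \<Rightarrow> bool" where
  "paraorth r t0 \<mu> n \<tau> X \<longleftrightarrow>
     (\<exists>cs. length cs = ntotal r n + 2 \<and> (\<forall>z. z \<noteq> 0 \<longrightarrow> X z = span_eval t0 (ntotal r n + 1) cs z)) \<and>
     (\<forall>z. z \<noteq> 0 \<longrightarrow> X z = \<tau> * cnj (X (1 / cnj z))) \<and>
     (\<forall>j<r. \<forall>k<n j.
        (\<integral>z. X z * halfpow t0 (int (n j) - 1 - 2 * int k) z \<partial>(\<mu> j)) = 0)"

end

theory Submission
  imports Defs "HOL-Computational_Algebra.Fundamental_Theorem_Algebra"
begin

text \<open>
  On the unit circle the \<open>\<tau>\<close>-invariance of \<open>X\<close> makes \<open>P(z) = z^((|n|+1)/2) X(z)\<close>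
  self-inversive: \<open>P(z) = \<tau> z^(|n|+1) conj (P(z))\<close>. Suppose fewer than \<open>n_j\<close> zeros of odd
  multiplicity lie inside \<open>\<Gamma>_j\<close>. Let \<open>Q\<close> have a simple zero at each of them and all
  remaining zeros at an endpoint of \<open>\<Gamma>_j\<close>, of degree exactly \<open>D = n_j - 1\<close>; then \<open>Q\<close> and
  \<open>PQ\<close> are self-inversive too. For a self-inversive \<open>R\<close> of degree \<open>M\<close>, the function
  \<open>e^(-iM\<theta>/2) R(e^(i\<theta>))\<close> is the product of a continuous nowhere vanishing function,
  which self-inversivity forces to be a constant multiple of a real one, and the real product
  of the \<open>sin((\<theta> - \<beta>)/2)^m\<close> over the unimodular zeros \<open>e^(i\<beta>)\<close> of multiplicity \<open>m\<close>.
  All zeros of \<open>PQ\<close> inside \<open>\<Gamma>_j\<close> have even order, so after a rotation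
  \<open>X(z) conj (z^(-D/2) Q(z))\<close> has nonnegative real part on \<open>\<Gamma>_j\<close>, positive off the finitely
  many zeros of \<open>PQ\<close>. But this function is a combination of the \<open>X(z) z^(-p)\<close>, \<open>|p| \<le> D/2\<close>,
  to which \<open>X\<close> is \<open>\<mu>_j\<close>-orthogonal, so its integral vanishes, contradicting the infinitude
  of \<open>supp \<mu>_j\<close>.
\<close>

section \<open>Angles on the unit circle\<close>

lemma cis_eq_cis_imp: "cis x = cis y \<Longrightarrow> \<exists>k::int. x = y + 2 * pi * k"
  using sin_cos_eq_iff[of x y] by (simp add: complex_eq_iff)

lemma cis_add_2pi_int: "cis (x + 2 * pi * of_int k) = cis x"
  by (metis cis.sel(1) cis.sel(2) complex.expand sin_cos_eq_iff)

lemma cis_eq_cis_imp_eq: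
  assumes "cis x = cis y" "\<bar>x - y\<bar> < 2 * pi" shows "x = y"
proof -
  obtain k :: int where k: "x = y + 2 * pi * k"
    using cis_eq_cis_imp[OF assms(1)] by blast
  then have "\<bar>real_of_int k\<bar> < 1"
    using assms(2) by (simp add: abs_mult)
  then show ?thesis using k by simp
qed

lemma cis_Arg_on_circle:
  assumes "norm z = 1" shows "cis (Arg z) = z"
proof -
  have "z \<noteq> 0" using assms by auto
  then show ?thesis using assms by (simp add: cis_Arg sgn_div_norm)
qed

lemma cis_surj_interval:
  assumes "norm u = 1" shows "\<exists>\<beta>. a < \<beta> \<and> \<beta> \<le> a + 2 * pi \<and> cis \<beta> = u"
proof -
  define \<beta> where "\<beta> = a + 2 * pi - 2 * pi * frac ((a - Arg u) / (2 * pi))"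
  define k :: int where "k = 1 + \<lfloor>(a - Arg u) / (2 * pi)\<rfloor>"
  have "\<beta> = Arg u + 2 * pi * of_int k"
    unfolding \<beta>_def frac_def k_def by (simp add: field_simps)
  then have "cis \<beta> = cis (Arg u)" using cis_add_2pi_int by metis
  also have "\<dots> = u" using assms by (rule cis_Arg_on_circle)
  finally have "cis \<beta> = u" .
  moreover have "a < \<beta>" "\<beta> \<le> a + 2 * pi"
    unfolding \<beta>_def using frac_ge_0 frac_lt_1 by (auto simp: mult_less_cancel_left_pos)
  ultimately show ?thesis by blast
qed

lemma argt_bounds: "t0 \<le> argt t0 z" "argt t0 z < t0 + 2 * pi"
  unfolding argt_def using frac_ge_0 frac_lt_1 by (auto simp: mult_less_cancel_left_pos)

lemma cis_argt:
  assumes "norm z = 1" shows "cis (argt t0 z) = z"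
proof -
  define k :: int where "k = - \<lfloor>(Arg z - t0) / (2 * pi)\<rfloor>"
  have "argt t0 z = Arg z + 2 * pi * of_int k"
    unfolding argt_def frac_def k_def by (simp add: field_simps)
  then have "cis (argt t0 z) = cis (Arg z)" using cis_add_2pi_int by metis
  also have "\<dots> = z" using assms by (rule cis_Arg_on_circle)
  finally show ?thesis .
qed

lemma argt_cis:
  assumes "t0 \<le> \<theta>" "\<theta> < t0 + 2 * pi" shows "argt t0 (cis \<theta>) = \<theta>"
  using argt_bounds[of t0 "cis \<theta>"] assms
  by (intro cis_eq_cis_imp_eq) (auto simp: cis_argt)

lemma halfpow_on_circle:
  "norm z = 1 \<Longrightarrow> halfpow t0 k z = cis (of_int k * argt t0 z / 2)"
  unfolding halfpow_def by (simp add: cis_conv_exp)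

lemma halfpow_nonzero: "z \<noteq> 0 \<Longrightarrow> halfpow t0 k z \<noteq> 0"
  unfolding halfpow_def by simp

lemma cis_diff_cis:
  "cis \<theta> - cis \<beta> = 2 * \<i> * cis (\<beta> / 2) * cis (\<theta> / 2) * of_real (sin ((\<theta> - \<beta>) / 2))"
proof -
  have m: "sin ((\<beta> - \<theta>) / 2) = - sin ((\<theta> - \<beta>) / 2)"
    by (metis minus_diff_eq minus_divide_left sin_minus)
  have "cos \<theta> - cos \<beta> = - 2 * sin ((\<theta> - \<beta>) / 2) * sin ((\<theta> + \<beta>) / 2)"
    using cos_diff_cos[of \<theta> \<beta>] m by (simp add: algebra_simps)
  moreover have "sin \<theta> - sin \<beta> = 2 * sin ((\<theta> - \<beta>) / 2) * cos ((\<theta> + \<beta>) / 2)"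
    using sin_diff_sin[of \<theta> \<beta>] by simp
  ultimately have "cis \<theta> - cis \<beta> = 2 * \<i> * cis ((\<theta> + \<beta>) / 2) * of_real (sin ((\<theta> - \<beta>) / 2))"
    by (simp add: complex_eq_iff algebra_simps)
  moreover have "cis ((\<theta> + \<beta>) / 2) = cis (\<beta> / 2) * cis (\<theta> / 2)"
    by (simp add: cis_mult add_divide_distrib add.commute)
  ultimately show ?thesis by (simp only: mult.assoc)
qed

section \<open>Self-inversive polynomials\<close>

text \<open>
  \<open>self_inversive M \<gamma> P\<close> says \<open>z^M conj (P (1 / conj z)) = conj \<gamma> P(z)\<close>, i.e. \<open>P\<close> is
  self-inversive as a polynomial of formal degree \<open>M\<close>; only its values on the circle are used.
\<close>
definition self_inversive :: "nat \<Rightarrow> complex \<Rightarrow> complex poly \<Rightarrow> bool" where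
  "self_inversive M \<gamma> P \<longleftrightarrow>
     norm \<gamma> = 1 \<and> (\<forall>z. norm z = 1 \<longrightarrow> poly P z = \<gamma> * z ^ M * cnj (poly P z))"

lemma self_inversive_linear:
  assumes "norm u = 1" shows "self_inversive 1 (- u) [:- u, 1:]"
  unfolding self_inversive_def
proof (intro conjI allI impI)
  fix z :: complex assume "norm z = 1"
  then have "z * cnj z = 1" "u * cnj u = 1"
    using assms by (simp_all add: complex_norm_square[symmetric])
  moreover have "- u * z * cnj (z - u) = - u * (z * cnj z) + (u * cnj u) * z"
    by (simp add: algebra_simps)
  ultimately show "poly [:- u, 1:] z = - u * z ^ 1 * cnj (poly [:- u, 1:] z)" by simp
qed (use assms in simp)

lemma self_inversive_mult:
  assumes "self_inversive M \<gamma> P" "self_inversive M' \<gamma>' Q"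
  shows "self_inversive (M + M') (\<gamma> * \<gamma>') (P * Q)"
  unfolding self_inversive_def
proof (intro conjI allI impI)
  show "norm (\<gamma> * \<gamma>') = 1" using assms by (simp add: self_inversive_def norm_mult)
  fix z :: complex assume "norm z = 1"
  then have "poly (P * Q) z = (\<gamma> * z ^ M * cnj (poly P z)) * (\<gamma>' * z ^ M' * cnj (poly Q z))"
    using assms by (simp add: self_inversive_def)
  also have "\<dots> = \<gamma> * \<gamma>' * z ^ (M + M') * cnj (poly (P * Q) z)"
    by (simp add: power_add algebra_simps)
  finally show "poly (P * Q) z = \<gamma> * \<gamma>' * z ^ (M + M') * cnj (poly (P * Q) z)" .
qed

lemma self_inversive_power:
  assumes "self_inversive M \<gamma> P" shows "self_inversive (k * M) (\<gamma> ^ k) (P ^ k)"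
proof (induction k)
  case 0
  then show ?case by (simp add: self_inversive_def)
next
  case (Suc k)
  then show ?case using self_inversive_mult[OF assms Suc] by (simp add: mult.commute)
qed

lemma self_inversive_prod:
  assumes "finite W" "\<And>w. w \<in> W \<Longrightarrow> self_inversive (M w) (\<gamma> w) (P w)"
  shows "self_inversive (\<Sum>w\<in>W. M w) (\<Prod>w\<in>W. \<gamma> w) (\<Prod>w\<in>W. P w)"
  using assms
proof (induction W rule: finite_induct)
  case empty
  then show ?case by (simp add: self_inversive_def)
next
  case (insert w W)
  then have "self_inversive (M w + (\<Sum>w\<in>W. M w)) (\<gamma> w * (\<Prod>w\<in>W. \<gamma> w)) (P w * (\<Prod>w\<in>W. P w))"
    by (intro self_inversive_mult) auto
  then show ?case using insert.hyps by simp
qed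

lemma self_inversive_cis:
  assumes "self_inversive M \<gamma> P"
  shows "cis (- (M * \<theta> / 2)) * poly P (cis \<theta>) = \<gamma> * cnj (cis (- (M * \<theta> / 2)) * poly P (cis \<theta>))"
proof -
  let ?c = "cis (- (M * \<theta> / 2))"
  have "poly P (cis \<theta>) = \<gamma> * cis \<theta> ^ M * cnj (poly P (cis \<theta>))"
    using assms by (simp add: self_inversive_def)
  then have "?c * poly P (cis \<theta>) = ?c * (\<gamma> * cis \<theta> ^ M * cnj (poly P (cis \<theta>)))"
    by (rule arg_cong)
  also have "\<dots> = \<gamma> * (?c * cis \<theta> ^ M) * cnj (poly P (cis \<theta>))"
    by (simp only: ac_simps)
  also have "?c * cis \<theta> ^ M = cnj ?c"
    by (simp add: Complex.DeMoivre cis_mult cis_cnj mult.commute)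
  also have "\<gamma> * cnj ?c * cnj (poly P (cis \<theta>)) = \<gamma> * cnj (?c * poly P (cis \<theta>))"
    by simp
  finally show ?thesis .
qed

lemma order_prod_linear:
  fixes W :: "'a::idom set"
  assumes "finite W"
  shows "order u (\<Prod>w\<in>W. [:- w, 1:]) = (if u \<in> W then 1 else 0)"
proof (cases "u \<in> W")
  case True
  have "order u (\<Prod>w\<in>W. [:- w, 1:]) = order u ([:- u, 1:] * (\<Prod>w\<in>W - {u}. [:- w, 1:]))"
    using assms True by (simp add: prod.remove)
  also have "\<dots> = order u [:- u, 1:] + order u (\<Prod>w\<in>W - {u}. [:- w, 1:])"
    using assms by (intro order_mult) (auto simp del: mult_pCons_left)
  also have "order u [:- u, 1:] = 1"
    using order_power_n_n[of u 1] by simp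
  also have "order u (\<Prod>w\<in>W - {u}. [:- w, 1:]) = 0"
    using assms by (intro order_0I) (simp add: poly_prod)
  finally show ?thesis using True by simp
next
  case False
  then have "order u (\<Prod>w\<in>W. [:- w, 1:]) = 0"
    using assms by (intro order_0I) (auto simp: poly_prod)
  then show ?thesis using False by simp
qed

lemma self_inversive_with_simple_roots:
  assumes "finite W" "\<And>w. w \<in> W \<Longrightarrow> norm w = 1" "norm c = 1" "card W \<le> D"
  obtains Q \<gamma> where "Q \<noteq> 0" "degree Q = D" "self_inversive D \<gamma> Q"
    "\<And>u. u \<noteq> c \<Longrightarrow> order u Q = (if u \<in> W then 1 else 0)"
proof
  define Q where "Q = (\<Prod>w\<in>W. [:- w, 1:]) * [:- c, 1:] ^ (D - card W)"
  have nz: "(\<Prod>w\<in>W. [:- w, 1:]) \<noteq> 0" "[:- c, 1:] ^ (D - card W) \<noteq> 0"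
    using assms(1) by auto
  then show "Q \<noteq> 0" by (simp add: Q_def)
  show "degree Q = D"
    using nz assms(4) by (simp add: Q_def degree_mult_eq degree_prod_sum_eq degree_linear_power)
  have "self_inversive (\<Sum>w\<in>W. 1) (\<Prod>w\<in>W. - w) (\<Prod>w\<in>W. [:- w, 1:])"
    using assms by (intro self_inversive_prod self_inversive_linear) auto
  then have "self_inversive (card W + (D - card W) * 1) ((\<Prod>w\<in>W. - w) * (- c) ^ (D - card W)) Q"
    unfolding Q_def using assms
    by (intro self_inversive_mult self_inversive_power self_inversive_linear) auto
  then show "self_inversive D ((\<Prod>w\<in>W. - w) * (- c) ^ (D - card W)) Q"
    using assms(4) by simp
  fix u :: complex assume "u \<noteq> c"
  then have "order u ([:- c, 1:] ^ (D - card W)) = 0" by (intro order_0I) simp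
  then show "order u Q = (if u \<in> W then 1 else 0)"
    using nz assms(1) by (simp add: Q_def order_mult order_prod_linear)
qed

lemma self_inversive_even_product:
  fixes P :: "complex poly"
  assumes "P \<noteq> 0" "b - a < 2 * pi"
    and "card {w \<in> cis ` {a<..<b}. poly P w = 0 \<and> odd (order w P)} \<le> D"
  obtains Q \<gamma> where "Q \<noteq> 0" "degree Q = D" "self_inversive D \<gamma> Q"
    "\<And>u. u \<in> cis ` {a<..<b} \<Longrightarrow> even (order u (P * Q))"
proof -
  define W where "W = {w \<in> cis ` {a<..<b}. poly P w = 0 \<and> odd (order w P)}"
  have W: "finite W" "\<And>w. w \<in> W \<Longrightarrow> norm w = 1"
    using poly_roots_finite[OF assms(1)] by (auto simp: W_def intro: finite_subset)
  obtain Q \<gamma> where Q: "Q \<noteq> 0" "degree Q = D" "self_inversive D \<gamma> Q"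
      "\<And>u. u \<noteq> cis a \<Longrightarrow> order u Q = (if u \<in> W then 1 else 0)"
    using self_inversive_with_simple_roots[OF W norm_cis] assms(3) unfolding W_def by blast
  \<comment> \<open>the padding zeros of \<open>Q\<close> sit at \<open>cis a\<close>, outside the open arc\<close>
  have "even (order u (P * Q))" if u: "u \<in> cis ` {a<..<b}" for u
  proof -
    have "u \<noteq> cis a" using u assms(2) cis_eq_cis_imp_eq by fastforce
    then have order: "order u (P * Q) = order u P + (if u \<in> W then 1 else 0)"
      using assms(1) Q by (simp add: order_mult)
    have "poly P u = 0" if "odd (order u P)"
      using that assms(1) by (metis order_root odd_pos neq0_conv)
    then have "u \<in> W \<longleftrightarrow> odd (order u P)"
      using u by (auto simp: W_def)
    with order show ?thesis by auto
  qed
  with Q(1-3) that show ?thesis by blast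
qed

section \<open>Sign of a self-inversive polynomial on an arc\<close>

lemma poly_cis_factorization:
  fixes P :: "complex poly"
  assumes "P \<noteq> 0" and \<beta>: "\<And>u. poly P u = 0 \<Longrightarrow> norm u = 1 \<Longrightarrow> cis (\<beta> u) = u"
  obtains h where "continuous_on UNIV h" "\<And>\<theta>. h \<theta> \<noteq> 0"
    "\<And>\<theta>. poly P (cis \<theta>) =
       h \<theta> * of_real (\<Prod>u\<in>{u. poly P u = 0 \<and> norm u = 1}. sin ((\<theta> - \<beta> u) / 2) ^ order u P)"
proof -
  define Zc where "Zc = {u. poly P u = 0 \<and> norm u = 1}"
  define Zo where "Zo = {u. poly P u = 0 \<and> norm u \<noteq> 1}"
  have roots: "{u. poly P u = 0} = Zo \<union> Zc" "Zo \<inter> Zc = {}"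
    by (auto simp: Zc_def Zo_def)
  have fin: "finite Zc" "finite Zo"
    using poly_roots_finite[OF assms(1)] by (auto simp: Zc_def Zo_def)
  define h where "h \<theta> = lead_coeff P * (\<Prod>u\<in>Zo. (cis \<theta> - u) ^ order u P)
      * (\<Prod>u\<in>Zc. (2 * \<i> * cis (\<beta> u / 2) * cis (\<theta> / 2)) ^ order u P)" for \<theta>
  have "continuous_on UNIV h"
    unfolding h_def by (intro continuous_intros) auto
  moreover have "h \<theta> \<noteq> 0" for \<theta>
  proof -
    have "cis \<theta> - u \<noteq> 0" if "u \<in> Zo" for u
      using that by (auto simp: Zo_def)
    then show ?thesis using assms(1) fin by (simp add: h_def prod_zero_iff)
  qed
  moreover have "poly P (cis \<theta>) = h \<theta> * of_real (\<Prod>u\<in>Zc. sin ((\<theta> - \<beta> u) / 2) ^ order u P)" for \<theta>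
  proof -
    have linear: "cis \<theta> - u = 2 * \<i> * cis (\<beta> u / 2) * cis (\<theta> / 2) * of_real (sin ((\<theta> - \<beta> u) / 2))"
      if "u \<in> Zc" for u
      using \<beta>[of u] that cis_diff_cis[of \<theta> "\<beta> u"] by (auto simp: Zc_def)
    have "poly P (cis \<theta>) = poly (smult (lead_coeff P) (\<Prod>u|poly P u = 0. [:-u, 1:] ^ order u P)) (cis \<theta>)"
      by (simp only: complex_poly_decompose)
    also have "\<dots> = lead_coeff P * (\<Prod>u\<in>Zo \<union> Zc. (cis \<theta> - u) ^ order u P)"
      by (simp add: poly_prod poly_power roots(1))
    also have "\<dots> = lead_coeff P * (\<Prod>u\<in>Zo. (cis \<theta> - u) ^ order u P) * (\<Prod>u\<in>Zc. (cis \<theta> - u) ^ order u P)"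
      using fin roots(2) by (simp add: prod.union_disjoint)
    also have "(\<Prod>u\<in>Zc. (cis \<theta> - u) ^ order u P)
        = (\<Prod>u\<in>Zc. (2 * \<i> * cis (\<beta> u / 2) * cis (\<theta> / 2)) ^ order u P * of_real (sin ((\<theta> - \<beta> u) / 2) ^ order u P))"
      by (intro prod.cong refl) (simp add: linear power_mult_distrib)
    finally show ?thesis by (simp add: h_def prod.distrib mult.assoc)
  qed
  ultimately show ?thesis using that unfolding Zc_def by blast
qed

lemma continuous_eq_off_cis_preimage:
  fixes f g :: "real \<Rightarrow> 'a::t2_space"
  assumes "continuous_on UNIV f" "continuous_on UNIV g" "finite F"
    and "\<And>t. cis t \<notin> F \<Longrightarrow> f t = g t"
  shows "f \<theta> = g \<theta>"
proof -
  have "\<exists>t\<in>{t. cis t \<notin> F}. dist t \<theta> < e" if "0 < e" for e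
  proof -
    define I where "I = {\<theta><..<\<theta> + min e pi}"
    have "inj_on cis I"
      by (rule inj_onI) (auto simp: I_def intro!: cis_eq_cis_imp_eq)
    then have "finite (cis -` F \<inter> I)"
      using assms(3) by (intro finite_vimage_IntI)
    moreover have "infinite I" using that by (simp add: I_def)
    ultimately have "infinite (I - cis -` F \<inter> I)"
      by (rule Diff_infinite_finite)
    then obtain t where "t \<in> I" "cis t \<notin> F"
      by (metis Diff_iff IntI finite.emptyI vimageI2 ex_in_conv)
    then show ?thesis by (auto simp: I_def dist_real_def)
  qed
  then have "\<theta> \<in> closure {t. cis t \<notin> F}"
    by (simp add: closure_approachable)
  moreover have "closure {t. cis t \<notin> F} \<subseteq> {t. f t = g t}"
    using assms by (intro closure_minimal closed_Collect_eq) auto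
  ultimately show ?thesis by blast
qed

lemma continuous_nonzero_sign_const:
  fixes y :: "real \<Rightarrow> real"
  assumes "continuous_on {a..b} y" "\<And>t. t \<in> {a..b} \<Longrightarrow> y t \<noteq> 0"
  shows "\<exists>s. \<forall>t\<in>{a..b}. 0 < s * y t"
proof (cases "a \<le> b")
  case True
  have "0 < y a * y t" if t: "t \<in> {a..b}" for t
  proof (rule ccontr)
    assume "\<not> 0 < y a * y t"
    moreover have "0 < y a * y a"
      using assms(2)[of a] True by (metis atLeastAtMost_iff order_refl power2_eq_square zero_less_power2)
    moreover have "continuous_on {a..t} (\<lambda>t. y a * y t)"
      using t by (intro continuous_intros continuous_on_subset[OF assms(1)]) auto
    ultimately obtain x where "a \<le> x" "x \<le> t" "y a * y x = 0"
      using IVT2'[of "\<lambda>t. y a * y t" t 0 a] t by force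
    then show False using assms(2) t by auto
  qed
  then show ?thesis by blast
qed auto

lemma self_conj_rotate_positive:
  fixes g :: "real \<Rightarrow> complex"
  assumes "continuous_on {a..b} g" "norm \<gamma> = 1"
    and "\<And>\<theta>. \<theta> \<in> {a..b} \<Longrightarrow> g \<theta> \<noteq> 0" "\<And>\<theta>. \<theta> \<in> {a..b} \<Longrightarrow> g \<theta> = \<gamma> * cnj (g \<theta>)"
  shows "\<exists>\<kappa>. \<forall>\<theta>\<in>{a..b}. Im (\<kappa> * g \<theta>) = 0 \<and> 0 < Re (\<kappa> * g \<theta>)"
proof -
  define \<sigma> where "\<sigma> = csqrt \<gamma>"
  have \<sigma>: "\<sigma> * \<sigma> = \<gamma>" "cnj \<sigma> * \<sigma> = 1"
    using assms(2) power2_csqrt[of \<gamma>]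
    by (simp_all add: \<sigma>_def power2_eq_square complex_norm_square[symmetric] mult.commute)
  have real: "Im (cnj \<sigma> * g \<theta>) = 0" if "\<theta> \<in> {a..b}" for \<theta>
  proof -
    have "cnj \<sigma> * g \<theta> = (cnj \<sigma> * \<sigma>) * \<sigma> * cnj (g \<theta>)"
      using assms(4)[OF that] \<sigma>(1) by (simp add: mult.assoc)
    also have "\<dots> = cnj (cnj \<sigma> * g \<theta>)" using \<sigma>(2) by simp
    finally show ?thesis by (metis Reals_cnj_iff complex_is_Real_iff)
  qed
  have "continuous_on {a..b} (\<lambda>\<theta>. Re (cnj \<sigma> * g \<theta>))"
    by (intro continuous_intros assms(1))
  moreover have "Re (cnj \<sigma> * g \<theta>) \<noteq> 0" if "\<theta> \<in> {a..b}" for \<theta>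
  proof -
    have "cnj \<sigma> * g \<theta> \<noteq> 0" using assms(3)[OF that] \<sigma>(2) by auto
    then show ?thesis using real[OF that] by (auto simp: complex_eq_iff)
  qed
  ultimately obtain s where s: "\<forall>\<theta>\<in>{a..b}. 0 < s * Re (cnj \<sigma> * g \<theta>)"
    using continuous_nonzero_sign_const by blast
  have "Im (of_real s * cnj \<sigma> * g \<theta>) = 0 \<and> 0 < Re (of_real s * cnj \<sigma> * g \<theta>)"
    if "\<theta> \<in> {a..b}" for \<theta>
    using real[OF that] s that by (simp add: mult.assoc)
  then show ?thesis by blast
qed

lemma sin_half_diff_power_sign:
  assumes "a \<le> \<theta>" "\<theta> \<le> b" "a < \<beta>" "\<beta> \<le> a + 2 * pi" "\<beta> < b \<Longrightarrow> even m"
  shows "0 \<le> (if \<beta> < b then 1 else (-1) ^ m) * sin ((\<theta> - \<beta>) / 2) ^ m"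
proof (cases "\<beta> < b")
  case True
  then show ?thesis using assms(5) by (simp add: zero_le_even_power)
next
  case False
  have "0 \<le> sin ((\<beta> - \<theta>) / 2)" using assms False by (intro sin_ge_zero) auto
  also have "sin ((\<beta> - \<theta>) / 2) = - sin ((\<theta> - \<beta>) / 2)"
    by (metis minus_diff_eq minus_divide_left sin_minus)
  finally have "0 \<le> (- sin ((\<theta> - \<beta>) / 2)) ^ m" by (rule zero_le_power)
  then show ?thesis using False by (simp add: power_minus[of "sin ((\<theta> - \<beta>) / 2)"])
qed

lemma sin_product_sign_const:
  assumes "finite U" "\<And>u. u \<in> U \<Longrightarrow> a < \<beta> u \<and> \<beta> u \<le> a + 2 * pi"
    and "\<And>u. u \<in> U \<Longrightarrow> \<beta> u < b \<Longrightarrow> even (m u)"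
  shows "\<exists>\<epsilon>. \<epsilon> \<noteq> 0 \<and> (\<forall>\<theta>\<in>{a..b}. 0 \<le> \<epsilon> * (\<Prod>u\<in>U. sin ((\<theta> - \<beta> u) / 2) ^ m u))"
proof -
  define \<epsilon> where "\<epsilon> u = (if \<beta> u < b then 1 else (-1::real) ^ m u)" for u
  have "(\<Prod>u\<in>U. \<epsilon> u) \<noteq> 0" using assms(1) by (simp add: \<epsilon>_def)
  moreover have "0 \<le> (\<Prod>u\<in>U. \<epsilon> u) * (\<Prod>u\<in>U. sin ((\<theta> - \<beta> u) / 2) ^ m u)"
    if "\<theta> \<in> {a..b}" for \<theta>
    unfolding prod.distrib[symmetric] \<epsilon>_def
    using assms that by (intro prod_nonneg sin_half_diff_power_sign) auto
  ultimately show ?thesis by blast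
qed

lemma self_inversive_cis_factorization:
  fixes R :: "complex poly"
  assumes "R \<noteq> 0" "self_inversive M \<gamma> R"
    and \<beta>: "\<And>u. poly R u = 0 \<Longrightarrow> norm u = 1 \<Longrightarrow> cis (\<beta> u) = u"
  obtains g where "continuous_on UNIV g" "\<And>\<theta>. g \<theta> \<noteq> 0" "\<And>\<theta>. g \<theta> = \<gamma> * cnj (g \<theta>)"
    "\<And>\<theta> :: real. cis (- (M * \<theta> / 2)) * poly R (cis \<theta>) =
       g \<theta> * of_real (\<Prod>u\<in>{u. poly R u = 0 \<and> norm u = 1}. sin ((\<theta> - \<beta> u) / 2) ^ order u R)"
proof -
  define U where "U = {u. poly R u = 0 \<and> norm u = 1}"
  have U: "finite U" using poly_roots_finite[OF assms(1)] by (simp add: U_def)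
  define S where "S \<theta> = (\<Prod>u\<in>U. sin ((\<theta> - \<beta> u) / 2) ^ order u R)" for \<theta>
  obtain h where h: "continuous_on UNIV h" "\<And>\<theta>. h \<theta> \<noteq> 0" "\<And>\<theta>. poly R (cis \<theta>) = h \<theta> * of_real (S \<theta>)"
    using poly_cis_factorization[OF assms(1) \<beta>] unfolding S_def U_def by blast
  define g where "g \<theta> = cis (- (M * \<theta> / 2)) * h \<theta>" for \<theta> :: real
  have g_cont: "continuous_on UNIV g" unfolding g_def by (intro continuous_intros h(1)) auto
  \<comment> \<open>off the zeros of \<open>R\<close> the real factor cancels, and continuity does the rest\<close>
  have "g \<theta> = \<gamma> * cnj (g \<theta>)" for \<theta>
  proof (rule continuous_eq_off_cis_preimage[OF g_cont _ U])
    show "continuous_on UNIV (\<lambda>\<theta>. \<gamma> * cnj (g \<theta>))" by (intro continuous_intros g_cont)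
    fix t assume "cis t \<notin> U"
    then have "S t \<noteq> 0" using h(3)[of t] by (auto simp: U_def)
    moreover have "g t * of_real (S t) = \<gamma> * cnj (g t) * of_real (S t)"
      using self_inversive_cis[OF assms(2), of t] by (simp add: h(3) g_def mult.assoc)
    ultimately show "g t = \<gamma> * cnj (g t)" by simp
  qed
  moreover have "g \<theta> \<noteq> 0" for \<theta> using h(2) by (simp add: g_def)
  moreover have "cis (- (M * \<theta> / 2)) * poly R (cis \<theta>) = g \<theta> * of_real (S \<theta>)" for \<theta> :: real
    by (simp add: h(3) g_def)
  ultimately show ?thesis using that g_cont unfolding S_def U_def by blast
qed

lemma self_inversive_sign_on_arc:
  fixes R :: "complex poly"
  assumes "R \<noteq> 0" "self_inversive M \<gamma> R" "\<And>u. u \<in> cis ` {a<..<b} \<Longrightarrow> even (order u R)"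
  shows "\<exists>\<kappa>. \<forall>\<theta>\<in>{a..b}.
           Im (\<kappa> * (cis (- (M * \<theta> / 2)) * poly R (cis \<theta>))) = 0 \<and>
           0 \<le> Re (\<kappa> * (cis (- (M * \<theta> / 2)) * poly R (cis \<theta>))) \<and>
           (poly R (cis \<theta>) \<noteq> 0 \<longrightarrow> 0 < Re (\<kappa> * (cis (- (M * \<theta> / 2)) * poly R (cis \<theta>))))"
proof -
  \<comment> \<open>with \<open>\<beta> u \<in> (a, a + 2\<pi>]\<close>, a zero off the open arc has \<open>\<beta> u \<ge> b\<close>, so its sine factor
    does not change sign on \<open>[a, b]\<close>\<close>
  have "\<forall>u. \<exists>\<beta>. norm u = 1 \<longrightarrow> a < \<beta> \<and> \<beta> \<le> a + 2 * pi \<and> cis \<beta> = u"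
    using cis_surj_interval by blast
  then obtain \<beta> where \<beta>: "\<And>u. norm u = 1 \<Longrightarrow> a < \<beta> u \<and> \<beta> u \<le> a + 2 * pi \<and> cis (\<beta> u) = u"
    by (metis choice)
  define U where "U = {u. poly R u = 0 \<and> norm u = 1}"
  have U: "finite U" using poly_roots_finite[OF assms(1)] by (simp add: U_def)
  define S where "S \<theta> = (\<Prod>u\<in>U. sin ((\<theta> - \<beta> u) / 2) ^ order u R)" for \<theta>
  obtain g where g: "continuous_on UNIV g" "\<And>\<theta>. g \<theta> \<noteq> 0" "\<And>\<theta>. g \<theta> = \<gamma> * cnj (g \<theta>)"
    "\<And>\<theta> :: real. cis (- (M * \<theta> / 2)) * poly R (cis \<theta>) = g \<theta> * of_real (S \<theta>)"
    using self_inversive_cis_factorization[OF assms(1,2), of \<beta>] \<beta> unfolding S_def U_def by blast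
  have "norm \<gamma> = 1" using assms(2) by (simp add: self_inversive_def)
  then obtain \<kappa> where \<kappa>: "\<forall>\<theta>\<in>{a..b}. Im (\<kappa> * g \<theta>) = 0 \<and> 0 < Re (\<kappa> * g \<theta>)"
    using self_conj_rotate_positive[OF continuous_on_subset[OF g(1) subset_UNIV]] g(2,3) by blast
  have "even (order u R)" if "u \<in> U" "\<beta> u < b" for u
    using that \<beta>[of u] assms(3)[of u] by (force simp: U_def)
  then obtain \<epsilon> where \<epsilon>: "\<epsilon> \<noteq> 0" "\<forall>\<theta>\<in>{a..b}. 0 \<le> \<epsilon> * S \<theta>"
    using sin_product_sign_const[OF U, of a \<beta> b "\<lambda>u. order u R"] \<beta> unfolding S_def U_def by blast
  have "Im (\<epsilon> * \<kappa> * (cis (- (M * \<theta> / 2)) * poly R (cis \<theta>))) = 0 \<and>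
        0 \<le> Re (\<epsilon> * \<kappa> * (cis (- (M * \<theta> / 2)) * poly R (cis \<theta>))) \<and>
        (poly R (cis \<theta>) \<noteq> 0 \<longrightarrow> 0 < Re (\<epsilon> * \<kappa> * (cis (- (M * \<theta> / 2)) * poly R (cis \<theta>))))"
    if \<theta>: "\<theta> \<in> {a..b}" for \<theta> :: real
  proof -
    define p where "p = \<kappa> * g \<theta>"
    have p: "Im p = 0" "0 < Re p" using \<kappa> \<theta> by (auto simp: p_def)
    have v: "\<epsilon> * \<kappa> * (cis (- (M * \<theta> / 2)) * poly R (cis \<theta>)) = p * of_real (\<epsilon> * S \<theta>)"
      by (simp add: g(4) p_def)
    have "0 < \<epsilon> * S \<theta>" if "poly R (cis \<theta>) \<noteq> 0"
      using that g(4)[of \<theta>] \<epsilon> \<theta> by (auto simp: less_le)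
    then show ?thesis using p \<epsilon>(2) \<theta> unfolding v by (auto intro: mult_pos_pos)
  qed
  then show ?thesis by blast
qed

section \<open>Measures on the unit circle\<close>

lemma AE_in_msupp:
  fixes M :: "complex measure"
  assumes "sets M = sets borel"
  shows "AE z in M. z \<in> msupp M"
proof -
  define F where "F = {ball z e | z e. 0 < e \<and> emeasure M (ball z e) = 0}"
  obtain F' where F': "F' \<subseteq> F" "countable F'" "\<Union>F' = \<Union>F"
    using Lindelof[of F] by (auto simp: F_def)
  have "- msupp M \<subseteq> \<Union>F"
    by (force simp: msupp_def F_def)
  moreover have "(\<Union>S\<in>F'. S) \<in> null_sets M"
    by (rule null_sets_UN') (use F' in \<open>auto simp: F_def null_sets_def assms\<close>)
  ultimately show ?thesis
    using F' by (intro AE_I'[of "\<Union>F'"]) auto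
qed

lemma msupp_subset_closed:
  fixes M :: "complex measure"
  assumes "sets M = sets borel" "closed S" "AE z in M. z \<in> S"
  shows "msupp M \<subseteq> S"
proof
  fix z assume z: "z \<in> msupp M"
  show "z \<in> S"
  proof (rule ccontr)
    assume "z \<notin> S"
    then obtain e where e: "0 < e" "ball z e \<subseteq> - S"
      using assms(2) open_contains_ball by (metis ComplI open_Compl)
    have "AE x in M. x \<notin> ball z e" using assms(3) by eventually_elim (use e in auto)
    moreover have "{x \<in> space M. \<not> x \<notin> ball z e} = ball z e"
      using sets_eq_imp_space_eq[OF assms(1)] by auto
    ultimately have "emeasure M (ball z e) = 0"
      using AE_iff_measurable[of "ball z e" M] assms(1) by simp
    then show False using z e(1) by (auto simp: msupp_def)
  qed
qed

lemma msupp_subset_of_integral_eq_0: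
  fixes M :: "complex measure" and f :: "complex \<Rightarrow> real"
  assumes "sets M = sets borel" "closed S" "has_bochner_integral M f 0"
    and "AE z in M. 0 \<le> f z \<and> (z \<notin> S \<longrightarrow> 0 < f z)"
  shows "msupp M \<subseteq> S"
proof (rule msupp_subset_closed[OF assms(1,2)])
  have "AE z in M. f z = 0"
    using integral_nonneg_eq_0_iff_AE[of M f] assms(3,4) by (auto simp: has_bochner_integral_iff)
  then show "AE z in M. z \<in> S" using assms(4) by eventually_elim auto
qed

lemma Arg_measurable [measurable]: "Arg \<in> borel_measurable borel"
proof -
  define A where "A = - (\<real>\<^sub>\<le>\<^sub>0 :: complex set)"
  have A: "A \<in> sets borel" unfolding A_def by (intro borel_open) (simp add: open_Compl)
  have Arg_A: "(\<lambda>z. if z \<in> A then Arg z else 0) \<in> borel_measurable borel"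
    by (rule borel_measurable_continuous_on_if[OF A])
       (auto simp: A_def continuous_on_Arg continuous_on_const)
  have Arg_compl_A: "(\<lambda>z::complex. if z \<in> {0} then 0 else pi) \<in> borel_measurable borel"
    by (rule measurable_If_set) auto
  have "(\<lambda>z. if z \<in> A then (if z \<in> A then Arg z else 0) else (if z \<in> {0} then 0 else pi))
      \<in> borel_measurable borel"
    by (rule measurable_If_set[OF Arg_A Arg_compl_A]) (simp add: A)
  moreover have "(\<lambda>z. if z \<in> A then (if z \<in> A then Arg z else 0) else (if z \<in> {0} then 0 else pi)) = Arg"
  proof
    fix z :: complex
    show "(if z \<in> A then (if z \<in> A then Arg z else 0) else (if z \<in> {0} then 0 else pi)) = Arg z"
    proof (cases "z \<in> A")
      case False
      then obtain x where "z = complex_of_real x" "x \<le> 0"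
        unfolding A_def by (auto elim: nonpos_Reals_cases)
      then show ?thesis using False by (cases "x = 0") (auto simp: Arg_zero)
    qed simp
  qed
  ultimately show ?thesis by simp
qed

lemma argt_measurable [measurable]: "argt t0 \<in> borel_measurable borel"
  unfolding argt_def[abs_def] frac_def by measurable

lemma halfpow_measurable [measurable]: "halfpow t0 k \<in> borel_measurable borel"
  unfolding halfpow_def[abs_def] by measurable

lemma span_eval_measurable [measurable]: "span_eval t0 N cs \<in> borel_measurable borel"
  unfolding span_eval_def[abs_def] by measurable

lemma cnj_measurable [measurable]: "cnj \<in> borel_measurable borel"
  by (intro borel_measurable_continuous_onI continuous_intros)

lemma poly_measurable [measurable]: "poly p \<in> borel_measurable borel"
  for p :: "'a::{real_normed_field, second_countable_topology} poly"
  by (intro borel_measurable_continuous_onI continuous_intros)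

lemma angelesco_arcs_mono:
  assumes "angelesco_circle r t0 a b \<mu>" "i \<le> k" "k < r"
  shows "a i \<le> a k \<and> b i \<le> b k"
  using assms(2,3)
proof (induction k)
  case (Suc k)
  show ?case
  proof (cases "i = Suc k")
    case False
    then have "a i \<le> a k \<and> b i \<le> b k" using Suc by simp
    moreover have "b k \<le> a (Suc k)" "a (Suc k) < b (Suc k)" "a k < b k"
      using assms(1) Suc.prems by (auto simp: angelesco_circle_def)
    ultimately show ?thesis by linarith
  qed simp
qed simp

lemma angelesco_arc_bounds:
  assumes ang: "angelesco_circle r t0 a b \<mu>" and j: "j < r"
  shows "t0 \<le> a j" "b j \<le> t0 + 2 * pi" "b j = t0 + 2 * pi \<Longrightarrow> j = r - 1"
proof -
  have "a 0 \<le> a j" "b j \<le> b (r - 1)"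
    using angelesco_arcs_mono[OF ang, of 0 j] angelesco_arcs_mono[OF ang, of j "r - 1"] j by auto
  then show "t0 \<le> a j" "b j \<le> t0 + 2 * pi"
    using ang by (auto simp: angelesco_circle_def)
  show "j = r - 1" if "b j = t0 + 2 * pi"
  proof (rule ccontr)
    assume "j \<noteq> r - 1"
    then have "b j \<le> a (Suc j)" "a (Suc j) < b (Suc j)" "b (Suc j) \<le> b (r - 1)"
      using ang j angelesco_arcs_mono[OF ang, of "Suc j" "r - 1"] by (auto simp: angelesco_circle_def)
    then show False using ang that by (auto simp: angelesco_circle_def)
  qed
qed

lemma angelesco_AE_on_arc:
  assumes ang: "angelesco_circle r t0 a b \<mu>" and j: "j < r"
  shows "AE z in \<mu> j. \<exists>\<theta>\<in>{a j..b j}. z = cis \<theta> \<and> argt t0 z = \<theta>"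
proof -
  have sets: "sets (\<mu> j) = sets borel" and supp: "msupp (\<mu> j) \<subseteq> arc_cl (a j) (b j)"
    using ang j by (auto simp: angelesco_circle_def)
  note bounds = angelesco_arc_bounds[OF ang j]
  \<comment> \<open>\<open>argt\<close> jumps at \<open>cis t0\<close>; only the last arc can end there, and its measure has
    no atom at that point\<close>
  have "AE z in \<mu> j. b j = t0 + 2 * pi \<longrightarrow> z \<noteq> cis t0"
  proof (cases "b j = t0 + 2 * pi")
    case True
    then have "{cis t0} \<in> null_sets (\<mu> j)"
      using ang bounds(3) sets by (auto simp: angelesco_circle_def null_sets_def)
    then show ?thesis by (rule AE_I') auto
  qed simp
  with AE_in_msupp[OF sets] show ?thesis
  proof eventually_elim
    case (elim z)
    then obtain \<theta> where \<theta>: "\<theta> \<in> {a j..b j}" "z = cis \<theta>"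
      using supp by (auto simp: arc_cl_def)
    show ?case
    proof (cases "\<theta> < t0 + 2 * pi")
      case True
      then show ?thesis using \<theta> bounds argt_cis by auto
    next
      case False
      then have "\<theta> = t0 + 2 * pi" "b j = t0 + 2 * pi" using \<theta> bounds by auto
      moreover have "cis (t0 + 2 * pi) = cis t0" using cis_add_2pi_int[of t0 1] by simp
      ultimately show ?thesis using elim \<theta> by simp
    qed
  qed
qed

section \<open>Paraorthogonal functions\<close>

lemma span_eval_norm_le:
  assumes "norm z = 1" shows "norm (span_eval t0 N cs z) \<le> (\<Sum>i\<le>N. norm (cs ! i))"
  unfolding span_eval_def
  by (rule order_trans[OF norm_sum]) (simp add: norm_mult halfpow_on_circle[OF assms])

lemma poly_eq_sum_lessThan:
  fixes p :: "'a::comm_semiring_1 poly"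
  assumes "degree p < K" shows "poly p x = (\<Sum>i<K. coeff p i * x ^ i)"
proof -
  have "poly p x = (\<Sum>i\<le>degree p. coeff p i * x ^ i)" by (rule poly_altdef)
  also have "\<dots> = (\<Sum>i<K. coeff p i * x ^ i)"
    by (rule sum.mono_neutral_left) (use assms in \<open>auto simp: coeff_eq_0\<close>)
  finally show ?thesis .
qed

lemma cnj_halfpow_poly_expand:
  fixes Q :: "complex poly"
  assumes z: "norm z = 1" and "degree Q < K"
  shows "cnj (halfpow t0 (1 - int K) z * poly Q z)
         = (\<Sum>i<K. cnj (coeff Q i) * halfpow t0 (int K - 1 - 2 * int i) z)"
proof -
  define A where "A = argt t0 z"
  have "cnj (halfpow t0 (1 - int K) z) = cis (- (of_int (1 - int K) * A / 2))"
    by (simp only: halfpow_on_circle[OF z] cis_cnj A_def)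
  also have "- (of_int (1 - int K) * A / 2) = (real K - 1) * A / 2"
    by (simp add: field_simps)
  finally have h: "cnj (halfpow t0 (1 - int K) z) = cis ((real K - 1) * A / 2)" .
  have "z = cis A" by (simp add: A_def cis_argt z)
  then have "poly Q z = (\<Sum>i<K. coeff Q i * cis (real i * A))"
    using poly_eq_sum_lessThan[OF assms(2), of z] by (simp add: Complex.DeMoivre)
  then have "cnj (poly Q z) = (\<Sum>i<K. cnj (coeff Q i) * cis (- (real i * A)))"
    by (simp add: cis_cnj)
  with h have "cnj (halfpow t0 (1 - int K) z * poly Q z)
      = (\<Sum>i<K. cnj (coeff Q i) * (cis ((real K - 1) * A / 2) * cis (- (real i * A))))"
    by (simp add: sum_distrib_left ac_simps)
  also have "\<dots> = (\<Sum>i<K. cnj (coeff Q i) * cis ((real K - 1 - 2 * real i) * A / 2))"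
    by (simp add: cis_mult algebra_simps diff_divide_distrib add_divide_distrib)
  also have "\<dots> = (\<Sum>i<K. cnj (coeff Q i) * halfpow t0 (int K - 1 - 2 * int i) z)"
    by (simp add: halfpow_on_circle[OF z] A_def)
  finally show ?thesis .
qed

lemma paraorth_measurable:
  assumes "paraorth r t0 \<mu> n \<tau> X" shows "X \<in> borel_measurable borel"
proof -
  obtain cs where "\<And>z. z \<noteq> 0 \<Longrightarrow> X z = span_eval t0 (ntotal r n + 1) cs z"
    using assms unfolding paraorth_def by blast
  then have "X = (\<lambda>z. if z \<in> {0} then X 0 else span_eval t0 (ntotal r n + 1) cs z)"
    by auto
  also have "\<dots> \<in> borel_measurable borel"
    by (rule measurable_If_set) auto
  finally show ?thesis .
qed

lemma paraorth_bounded_on_circle: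
  assumes "paraorth r t0 \<mu> n \<tau> X" shows "\<exists>B. \<forall>z. norm z = 1 \<longrightarrow> norm (X z) \<le> B"
proof -
  obtain cs where "\<And>z. z \<noteq> 0 \<Longrightarrow> X z = span_eval t0 (ntotal r n + 1) cs z"
    using assms unfolding paraorth_def by blast
  then show ?thesis using span_eval_norm_le by (metis norm_zero zero_neq_one)
qed

lemma paraorth_orthogonal_poly:
  assumes ang: "angelesco_circle r t0 a b \<mu>" and X: "paraorth r t0 \<mu> n \<tau> X"
    and j: "j < r" and Q: "degree Q < n j"
  shows "has_bochner_integral (\<mu> j) (\<lambda>z. X z * cnj (halfpow t0 (1 - int (n j)) z * poly Q z)) 0"
proof -
  have sets: "sets (\<mu> j) = sets borel"
    using ang j by (auto simp: angelesco_circle_def)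
  have fin: "finite_measure (\<mu> j)"
    using ang j by (intro finite_measureI) (auto simp: angelesco_circle_def)
  have meas: "borel_measurable (\<mu> j) = borel_measurable borel"
    by (rule measurable_cong_sets[OF sets refl])
  note X_meas [measurable] = paraorth_measurable[OF X]
  have circle: "AE z in \<mu> j. norm z = 1"
    using angelesco_AE_on_arc[OF ang j] by eventually_elim (metis norm_cis)
  obtain B where B: "\<And>z. norm z = 1 \<Longrightarrow> norm (X z) \<le> B"
    using paraorth_bounded_on_circle[OF X] by blast
  define g where "g k = (\<lambda>z. X z * halfpow t0 (int (n j) - 1 - 2 * int k) z)" for k
  have "has_bochner_integral (\<mu> j) (g k) 0" if "k < n j" for k
  proof -
    have "integrable (\<mu> j) (g k)"
    proof (rule finite_measure.integrable_const_bound[OF fin])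
      show "AE z in \<mu> j. norm (g k z) \<le> B"
        using circle by eventually_elim (simp add: g_def norm_mult halfpow_on_circle B)
      show "g k \<in> borel_measurable (\<mu> j)"
        unfolding g_def meas by measurable
    qed
    then show ?thesis using X j that by (simp add: has_bochner_integral_iff paraorth_def g_def)
  qed
  then have sum: "has_bochner_integral (\<mu> j) (\<lambda>z. \<Sum>k<n j. cnj (coeff Q k) * g k z) (\<Sum>k<n j. cnj (coeff Q k) * 0)"
    by (intro has_bochner_integral_sum has_bochner_integral_mult_right) auto
  have expand: "X z * cnj (halfpow t0 (1 - int (n j)) z * poly Q z) = (\<Sum>k<n j. cnj (coeff Q k) * g k z)"
    if "norm z = 1" for z
    unfolding cnj_halfpow_poly_expand[OF that Q] g_def by (simp add: sum_distrib_left ac_simps)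
  have "AE z in \<mu> j. X z * cnj (halfpow t0 (1 - int (n j)) z * poly Q z) = (\<Sum>k<n j. cnj (coeff Q k) * g k z)"
    using circle by (rule AE_mp) (intro AE_I2 impI expand)
  then have "has_bochner_integral (\<mu> j) (\<lambda>z. X z * cnj (halfpow t0 (1 - int (n j)) z * poly Q z)) 0
      \<longleftrightarrow> has_bochner_integral (\<mu> j) (\<lambda>z. \<Sum>k<n j. cnj (coeff Q k) * g k z) 0"
    by (intro has_bochner_integral_cong_AE) (unfold meas g_def; measurable)+
  with sum show ?thesis by simp
qed

lemma paraorth_self_inversive:
  assumes inv: "\<And>z. z \<noteq> 0 \<Longrightarrow> X z = \<tau> * cnj (X (1 / cnj z))" and "norm \<tau> = 1"
    and P: "\<And>z. z \<noteq> 0 \<Longrightarrow> poly P z = halfpow t0 (int M) z * X z"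
  shows "self_inversive M \<tau> P"
  unfolding self_inversive_def
proof (intro conjI allI impI)
  fix z :: complex assume z: "norm z = 1"
  define c where "c = cis (M * argt t0 z / 2)"
  have "z \<noteq> 0" "z * cnj z = 1"
    using z by (auto simp: complex_norm_square[symmetric])
  then have "1 / cnj z = z" by (simp add: divide_simps mult.commute)
  then have "X z = \<tau> * cnj (X z)"
    using inv[OF \<open>z \<noteq> 0\<close>] by simp
  moreover have "poly P z = c * X z"
    using P[OF \<open>z \<noteq> 0\<close>] z by (simp add: halfpow_on_circle c_def)
  moreover have "z ^ M = c * c"
    using cis_argt[OF z, of t0] by (metis Complex.DeMoivre c_def cis_mult field_sum_of_halves)
  moreover have "c * cnj c = 1" by (simp add: c_def cis_cnj cis_mult)
  ultimately show "poly P z = \<tau> * z ^ M * cnj (poly P z)"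
    by (metis (no_types, lifting) complex_cnj_mult mult.assoc mult.commute mult.left_commute mult_1)
qed (rule assms(2))

lemma pairing_on_circle:
  assumes "argt t0 (cis \<theta>) = \<theta>" "self_inversive D \<gamma> Q"
    and "poly P (cis \<theta>) = halfpow t0 (int M) (cis \<theta>) * X (cis \<theta>)"
  shows "\<gamma> * (X (cis \<theta>) * cnj (halfpow t0 (- int D) (cis \<theta>) * poly Q (cis \<theta>)))
       = cis (- (real (M + D) * \<theta> / 2)) * poly (P * Q) (cis \<theta>)"
proof -
  have hp: "halfpow t0 k (cis \<theta>) = cis (of_int k * \<theta> / 2)" for k
    using halfpow_on_circle[of "cis \<theta>" t0 k] assms(1) by simp
  have X: "X (cis \<theta>) = cis (- (M * \<theta> / 2)) * poly P (cis \<theta>)"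
    by (simp add: assms(3) hp cis_mult flip: mult.assoc)
  have Q: "\<gamma> * cnj (cis (- (D * \<theta> / 2)) * poly Q (cis \<theta>)) = cis (- (D * \<theta> / 2)) * poly Q (cis \<theta>)"
    using self_inversive_cis[OF assms(2), of \<theta>] by (rule sym)
  have c: "cis (- (M * \<theta> / 2)) * cis (- (D * \<theta> / 2)) = cis (- (real (M + D) * \<theta> / 2))"
    by (simp add: cis_mult algebra_simps add_divide_distrib)
  have "\<gamma> * (X (cis \<theta>) * cnj (halfpow t0 (- int D) (cis \<theta>) * poly Q (cis \<theta>)))
      = X (cis \<theta>) * (\<gamma> * cnj (cis (- (D * \<theta> / 2)) * poly Q (cis \<theta>)))"
    by (simp add: hp)
  also have "\<dots> = cis (- (M * \<theta> / 2)) * poly P (cis \<theta>) * (cis (- (D * \<theta> / 2)) * poly Q (cis \<theta>))"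
    by (simp only: Q X)
  also have "\<dots> = cis (- (real (M + D) * \<theta> / 2)) * poly (P * Q) (cis \<theta>)"
    by (simp only: poly_mult flip: c) (simp only: ac_simps)
  finally show ?thesis .
qed

lemma paraorth_pairing_sign:
  assumes ang: "angelesco_circle r t0 a b \<mu>" and j: "j < r"
    and P: "\<And>z. z \<noteq> 0 \<Longrightarrow> poly P z = halfpow t0 (int M) z * X z" "self_inversive M \<tau> P"
    and Q: "self_inversive D \<gamma> Q" and PQ: "P * Q \<noteq> 0"
    and even: "\<And>u. u \<in> cis ` {a j<..<b j} \<Longrightarrow> even (order u (P * Q))"
  obtains \<kappa> where "AE z in \<mu> j.
    0 \<le> Re (\<kappa> * (X z * cnj (halfpow t0 (- int D) z * poly Q z))) \<and>
    (poly (P * Q) z \<noteq> 0 \<longrightarrow> 0 < Re (\<kappa> * (X z * cnj (halfpow t0 (- int D) z * poly Q z))))"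
proof -
  obtain \<kappa> where \<kappa>: "\<forall>\<theta>\<in>{a j..b j}.
      Im (\<kappa> * (cis (- (real (M + D) * \<theta> / 2)) * poly (P * Q) (cis \<theta>))) = 0 \<and>
      0 \<le> Re (\<kappa> * (cis (- (real (M + D) * \<theta> / 2)) * poly (P * Q) (cis \<theta>))) \<and>
      (poly (P * Q) (cis \<theta>) \<noteq> 0 \<longrightarrow>
        0 < Re (\<kappa> * (cis (- (real (M + D) * \<theta> / 2)) * poly (P * Q) (cis \<theta>))))"
    using self_inversive_sign_on_arc[OF PQ self_inversive_mult[OF P(2) Q] even] by blast
  have "AE z in \<mu> j.
    0 \<le> Re (\<kappa> * \<gamma> * (X z * cnj (halfpow t0 (- int D) z * poly Q z))) \<and>
    (poly (P * Q) z \<noteq> 0 \<longrightarrow> 0 < Re (\<kappa> * \<gamma> * (X z * cnj (halfpow t0 (- int D) z * poly Q z))))"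
    using angelesco_AE_on_arc[OF ang j]
  proof eventually_elim
    case (elim z)
    then obtain \<theta> where \<theta>: "\<theta> \<in> {a j..b j}" "z = cis \<theta>" "argt t0 (cis \<theta>) = \<theta>" by blast
    let ?v = "cis (- (real (M + D) * \<theta> / 2)) * poly (P * Q) (cis \<theta>)"
    have "\<gamma> * (X (cis \<theta>) * cnj (halfpow t0 (- int D) (cis \<theta>) * poly Q (cis \<theta>))) = ?v"
      by (rule pairing_on_circle[of t0 \<theta> D \<gamma> Q P M X, OF \<theta>(3) Q P(1)[OF cis_neq_zero]])
    then have "\<kappa> * \<gamma> * (X (cis \<theta>) * cnj (halfpow t0 (- int D) (cis \<theta>) * poly Q (cis \<theta>))) = \<kappa> * ?v"
      by (simp only: mult.assoc)
    moreover have "0 \<le> Re (\<kappa> * ?v) \<and> (poly (P * Q) (cis \<theta>) \<noteq> 0 \<longrightarrow> 0 < Re (\<kappa> * ?v))"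
      using \<kappa> \<theta>(1) by blast
    ultimately show ?case unfolding \<theta>(2) by metis
  qed
  then show ?thesis using that by blast
qed

lemma paraorth_msupp_subset_zeros:
  assumes ang: "angelesco_circle r t0 a b \<mu>" and X: "paraorth r t0 \<mu> n \<tau> X" and j: "j < r"
    and P: "\<And>z. z \<noteq> 0 \<Longrightarrow> poly P z = halfpow t0 (int M) z * X z" "self_inversive M \<tau> P"
    and Q: "self_inversive D \<gamma> Q" "degree Q = D" "Suc D = n j" and PQ: "P * Q \<noteq> 0"
    and even: "\<And>u. u \<in> cis ` {a j<..<b j} \<Longrightarrow> even (order u (P * Q))"
  shows "msupp (\<mu> j) \<subseteq> {z. poly (P * Q) z = 0}"
proof -
  obtain \<kappa> where \<kappa>: "AE z in \<mu> j.
      0 \<le> Re (\<kappa> * (X z * cnj (halfpow t0 (- int D) z * poly Q z))) \<and>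
      (poly (P * Q) z \<noteq> 0 \<longrightarrow> 0 < Re (\<kappa> * (X z * cnj (halfpow t0 (- int D) z * poly Q z))))"
    using paraorth_pairing_sign[OF ang j P Q(1) PQ even] by blast
  define f where "f = (\<lambda>z. Re (\<kappa> * (X z * cnj (halfpow t0 (- int D) z * poly Q z))))"
  have "has_bochner_integral (\<mu> j) f (Re (\<kappa> * 0))"
    using paraorth_orthogonal_poly[OF ang X j, of Q] Q(2) Q(3)[symmetric] unfolding f_def
    by (intro has_bochner_integral_bounded_linear[OF bounded_linear_Re]
        has_bochner_integral_mult_right) simp
  moreover have "AE z in \<mu> j. 0 \<le> f z \<and> (z \<notin> {z. poly (P * Q) z = 0} \<longrightarrow> 0 < f z)"
    using \<kappa> by eventually_elim (simp add: f_def)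
  moreover have "sets (\<mu> j) = sets borel"
    using ang j by (simp add: angelesco_circle_def)
  ultimately show ?thesis
    using poly_roots_finite[OF PQ]
    by (intro msupp_subset_of_integral_eq_0 finite_imp_closed) simp_all
qed

theorem theorem4p7:
  fixes r :: nat and t0 :: real and a b :: "nat \<Rightarrow> real"
    and \<mu> :: "nat \<Rightarrow> complex measure" and n :: "nat \<Rightarrow> nat"
    and \<tau> :: complex and X :: "complex \<Rightarrow> complex"
  assumes "angelesco_circle r t0 a b \<mu>"
    and "phi_normal r t0 \<mu> n"
    and "norm \<tau> = 1"
    and "paraorth r t0 \<mu> n \<tau> X"
    and "\<exists>z. z \<noteq> 0 \<and> X z \<noteq> 0"
  shows "\<forall>j<r. \<forall>P :: complex poly.
           (\<forall>z. z \<noteq> 0 \<longrightarrow> poly P z = halfpow t0 (int (ntotal r n) + 1) z * X z) \<longrightarrow>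
           n j \<le> card {w \<in> arc_int (a j) (b j). poly P w = 0 \<and> odd (order w P)}"
proof (intro allI impI)
  fix j and P :: "complex poly"
  assume j: "j < r" and "\<forall>z. z \<noteq> 0 \<longrightarrow> poly P z = halfpow t0 (int (ntotal r n) + 1) z * X z"
  then have P: "\<And>z. z \<noteq> 0 \<Longrightarrow> poly P z = halfpow t0 (int (ntotal r n + 1)) z * X z"
    by (simp add: add.commute)
  have P0: "P \<noteq> 0" using assms(5) P halfpow_nonzero by force
  have "\<And>z. z \<noteq> 0 \<Longrightarrow> X z = \<tau> * cnj (X (1 / cnj z))"
    using assms(4) unfolding paraorth_def by blast
  then have SI: "self_inversive (ntotal r n + 1) \<tau> P"
    using assms(3) P by (rule paraorth_self_inversive)
  have arc: "b j - a j < 2 * pi" "infinite (msupp (\<mu> j))"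
    using assms(1) j by (auto simp: angelesco_circle_def)
  show "n j \<le> card {w \<in> arc_int (a j) (b j). poly P w = 0 \<and> odd (order w P)}"
  proof (rule ccontr)
    define D where "D = n j - 1"
    assume "\<not> ?thesis"
    then have D: "card {w \<in> cis ` {a j<..<b j}. poly P w = 0 \<and> odd (order w P)} \<le> D" "Suc D = n j"
      by (auto simp: D_def arc_int_def)
    obtain Q \<gamma> where Q: "Q \<noteq> 0" "degree Q = D" "self_inversive D \<gamma> Q"
      "\<And>u. u \<in> cis ` {a j<..<b j} \<Longrightarrow> even (order u (P * Q))"
      using self_inversive_even_product[OF P0 arc(1) D(1)] by blast
    have PQ: "P * Q \<noteq> 0" using P0 Q(1) by simp
    have "msupp (\<mu> j) \<subseteq> {z. poly (P * Q) z = 0}"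
      using paraorth_msupp_subset_zeros[OF assms(1,4) j P SI Q(3,2) D(2) PQ Q(4)] .
    then show False
      using arc(2) poly_roots_finite[OF PQ] by (meson finite_subset)
  qed
qed

end
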